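(* Let $r\in\{3,5\}$, let $q$ be an odd prime distinct from $r$, let $R=\mathrm{C}_q\times\mathrm{D}_{2r}$, and let $S\subseteq R$ with $S=S^{-1}$. If $\mathrm{Cay}(R,S)$ is a nontrivial generalised wreath product with respect to subgroups $K$ and $H$, and $K$ has prime order, then $\mathrm{Aut}(R)_S>1$.
   Context: $\mathrm{C}_q$ is the cyclic group of order $q$, $\mathrm{D}_{2r}$ the dihedral group of order $2r$. $\mathrm{Aut}(R)_S$ is the group of automorphisms of $R$ fixing $S$ setwise. $\mathrm{Cay}(R,S)$ (vertex set $R$, arcs $r\to sr$ for $s\in S$) is a nontrivial generalised wreath product with respect to $K$ and $H$ if $1<K\trianglelefteq H<R$ and $K(S\setminus H)=S\setminus H=(S\setminus H)K$. *)

theory Defs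
  imports "HOL-Algebra.Algebra" "HOL-Computational_Algebra.Primes"
begin

text \<open>Dihedral group of order 2r: elements x^b y^e (0 \<le> b < r, e \<in> {0,1}) encoded as (b, e),
  with y x y^-1 = x^-1, so (x^b1 y^e1)(x^b2 y^e2) = x^(b1 \<plusminus> b2) y^(e1+e2).\<close>
definition dihedral_group :: "nat \<Rightarrow> (int \<times> bool) monoid" where
  "dihedral_group r =
     \<lparr> carrier = {0..<int r} \<times> UNIV,
       monoid.mult = (\<lambda>(b1, e1) (b2, e2). ((b1 + (if e1 then - b2 else b2)) mod int r, e1 \<noteq> e2)),
       one = (0, False) \<rparr>"

definition CqD :: "nat \<Rightarrow> nat \<Rightarrow> (int \<times> (int \<times> bool)) monoid" where
  "CqD q r = DirProd (integer_mod_group q) (dihedral_group r)"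

definition nontrivial_gen_wreath :: "('a, 'b) monoid_scheme \<Rightarrow> 'a set \<Rightarrow> 'a set \<Rightarrow> 'a set \<Rightarrow> bool" where
  "nontrivial_gen_wreath R S K H \<longleftrightarrow>
     subgroup H R \<and> H \<noteq> carrier R \<and>
     K \<subseteq> H \<and> normal K (R\<lparr>carrier := H\<rparr>) \<and> K \<noteq> {\<one>\<^bsub>R\<^esub>} \<and>
     K <#>\<^bsub>R\<^esub> (S - H) = S - H \<and> (S - H) <#>\<^bsub>R\<^esub> K = S - H"

definition Aut_stab :: "('a, 'b) monoid_scheme \<Rightarrow> 'a set \<Rightarrow> ('a \<Rightarrow> 'a) set" where
  "Aut_stab R S = {\<sigma> \<in> iso R R. \<sigma> ` S = S}"

end

theory Submission
  imports Defs
begin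

(* An element (c, b, e) of C_q x D_2r stands for z^c x^b y^e.
  The nontrivial subgroup K contains all of C_q, or all rotations of D_2r, or a reflection x^a y
  but no nontrivial rotation of D_2r.
  In the first two cases S - H is a union of cosets of C_q, resp. of <x>. Together with S = S^-1
  this makes z -> z^-1 preserve S, unless H contains C_q x <x>; then H contains no reflection and
  z -> z^-1, x -> x^-1, y -> x^j y preserves S. In the C_q case j is chosen so that b -> j - b
  preserves {b. x^b y \<in> S}, which is possible since for r \<le> 5 this set or its complement has
  at most two elements.
  In the last case the H-conjugates of x^a y are reflections in K, hence equal to x^a y, so
  conjugation by x^a y fixes S \<inter> H pointwise and preserves S - H = K (S - H) K. *)

lemma carrier_CqD: "q > 0 \<Longrightarrow> carrier (CqD q r) = {0..<int q} \<times> {0..<int r} \<times> UNIV"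
  by (simp add: CqD_def DirProd_def dihedral_group_def carrier_integer_mod_group)

lemma mult_CqD [simp]:
  "(c, b, e) \<otimes>\<^bsub>CqD q r\<^esub> (c', b', e') =
     ((c + c') mod int q, (b + (if e then - b' else b')) mod int r, e \<noteq> e')"
  by (simp add: CqD_def DirProd_def dihedral_group_def)

lemma one_CqD: "\<one>\<^bsub>CqD q r\<^esub> = (0, 0, False)"
  by (simp add: CqD_def DirProd_def dihedral_group_def)

lemma group_dihedral_group:
  assumes "r > 0"
  shows "group (dihedral_group r)"
proof (rule groupI)
  fix x
  assume x: "x \<in> carrier (dihedral_group r)"
  obtain b e where [simp]: "x = (b, e)" by (cases x)
  show "\<exists>y\<in>carrier (dihedral_group r). y \<otimes>\<^bsub>dihedral_group r\<^esub> x = \<one>\<^bsub>dihedral_group r\<^esub>"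
    by (rule bexI[of _ "(if e then b else (- b) mod int r, e)"])
      (use x assms in \<open>auto simp: dihedral_group_def mod_simps\<close>)
qed (use assms in \<open>auto simp: dihedral_group_def mod_simps algebra_simps split: prod.splits\<close>)

lemma group_CqD: "q > 0 \<Longrightarrow> r > 0 \<Longrightarrow> group (CqD q r)"
  unfolding CqD_def by (intro DirProd_group group_dihedral_group group_integer_mod_group)

lemma inv_CqD:
  assumes "q > 0" "r > 0" "(c, b, e) \<in> carrier (CqD q r)"
  shows "inv\<^bsub>CqD q r\<^esub> (c, b, e) = ((- c) mod int q, if e then b else (- b) mod int r, e)"
proof -
  interpret group "CqD q r" using group_CqD assms by blast
  show ?thesis
    by (rule inv_equality) (use assms in \<open>auto simp: carrier_CqD one_CqD mod_simps\<close>)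
qed

lemma nat_pow_CqD:
  "(c, b, False) [^]\<^bsub>CqD q r\<^esub> (n :: nat) = ((int n * c) mod int q, (int n * b) mod int r, False)"
  by (induction n) (simp_all add: one_CqD mod_simps algebra_simps)

lemma involutive_hom_in_Aut_stab:
  assumes "f \<in> hom G G" and "\<And>x. x \<in> carrier G \<Longrightarrow> f (f x) = x"
    and "S \<subseteq> carrier G" and "f ` S \<subseteq> S"
  shows "f \<in> Aut_stab G S"
proof -
  have f: "f \<in> carrier G \<rightarrow> carrier G" using assms(1) by (simp add: hom_def)
  have "bij_betw f (carrier G) (carrier G)"
    by (rule bij_betwI[OF f f]) (use assms(2) in blast)+
  moreover have "S \<subseteq> f ` S"
  proof
    fix x
    assume "x \<in> S"
    then have "f x \<in> S" "f (f x) = x" using assms(2-4) by auto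
    then show "x \<in> f ` S" by (metis imageI)
  qed
  ultimately show ?thesis
    using assms(1,4) by (auto simp: Aut_stab_def iso_def)
qed

lemma (in group) conj_by_involution_hom:
  assumes "k \<in> carrier G" and "k \<otimes> k = \<one>"
  shows "(\<lambda>g. k \<otimes> g \<otimes> k) \<in> hom G G"
proof (rule homI)
  have cancel: "k \<otimes> (k \<otimes> x) = x" if "x \<in> carrier G" for x
    using assms that by (simp flip: m_assoc)
  fix g h
  assume "g \<in> carrier G" "h \<in> carrier G"
  then show "k \<otimes> (g \<otimes> h) \<otimes> k = k \<otimes> g \<otimes> k \<otimes> (k \<otimes> h \<otimes> k)"
    using assms by (simp add: m_assoc cancel)
qed (use assms in simp)

lemma exists_nat_mult_mod_eq:
  assumes "Factorial_Ring.prime p" and "\<not> int p dvd c"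
  shows "\<exists>n :: nat. (int n * c) mod int p = m mod int p"
proof -
  have "coprime c (int p)"
    using assms by (metis prime_imp_coprime coprime_commute prime_nat_int_transfer)
  then obtain u v where "u * c + v * int p = 1"
    using bezout_int[of c "int p"] by auto
  then have uc: "u * c = 1 + (- v) * int p" by simp
  have "p > 0" using assms(1) prime_gt_0_nat by blast
  then have "int (nat ((m * u) mod int p)) = (m * u) mod int p" by simp
  moreover have "((m * u) mod int p * c) mod int p = m mod int p"
  proof -
    have "((m * u) mod int p * c) mod int p = (m * (u * c)) mod int p"
      by (metis mod_mult_left_eq mult.assoc)
    also have "\<dots> = (m * (1 + (- v) * int p)) mod int p"
      by (simp only: uc)
    also have "\<dots> = (m + (- m * v) * int p) mod int p"
      by (simp add: algebra_simps)
    also have "\<dots> = m mod int p"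
      by (rule mod_mult_self1)
    finally show ?thesis .
  qed
  ultimately show ?thesis by (intro exI[of _ "nat ((m * u) mod int p)"]) simp
qed

(* z \<mapsto> z^s, x \<mapsto> x^k, y \<mapsto> x^j y *)
definition CqD_map ::
  "nat \<Rightarrow> nat \<Rightarrow> int \<Rightarrow> int \<Rightarrow> int \<Rightarrow> int \<times> int \<times> bool \<Rightarrow> int \<times> int \<times> bool" where
  "CqD_map q r s k j = (\<lambda>(c, b, e). ((s * c) mod int q, (k * b + (if e then j else 0)) mod int r, e))"

lemma CqD_map_apply [simp]:
  "CqD_map q r s k j (c, b, e) = ((s * c) mod int q, (k * b + (if e then j else 0)) mod int r, e)"
  by (simp add: CqD_map_def)

lemma CqD_map_hom:
  assumes "q > 0" "r > 0"
  shows "CqD_map q r s k j \<in> hom (CqD q r) (CqD q r)"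
proof (rule homI)
  have mod_inner: "(a + k * (x mod int r)) mod int r = (a + k * x) mod int r"
    "(a + (b + x mod int r)) mod int r = (a + (b + x)) mod int r" for a b k x
     apply (metis mod_add_right_eq mod_mult_right_eq)
    by (metis mod_add_right_eq)
  fix x y
  assume "x \<in> carrier (CqD q r)" "y \<in> carrier (CqD q r)"
  obtain c b e c' b' e' where xy: "x = (c, b, e)" "y = (c', b', e')"
    by (cases x; cases y) auto
  show "CqD_map q r s k j (x \<otimes>\<^bsub>CqD q r\<^esub> y) =
    CqD_map q r s k j x \<otimes>\<^bsub>CqD q r\<^esub> CqD_map q r s k j y"
    by (cases e; cases e') (simp_all add: xy mod_inner mod_simps algebra_simps)
qed (use assms in \<open>auto simp: carrier_CqD\<close>)

lemma CqD_map_involutive: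
  assumes "q > 0" "s \<in> {1, -1}" "k = -1 \<or> (k = 1 \<and> j = 0)" "x \<in> carrier (CqD q r)"
  shows "CqD_map q r s k j (CqD_map q r s k j x) = x"
  using assms by (cases x) (auto simp: carrier_CqD mod_simps algebra_simps)

lemma Cq_in_subgroup_CqD:
  assumes "Factorial_Ring.prime q" "Factorial_Ring.prime r" "q \<noteq> r" "odd q"
    and Y: "subgroup Y (CqD q r)" and cbe: "(c, b, e) \<in> Y" and c: "\<not> int q dvd c"
  shows "(m mod int q, 0, False) \<in> Y"
proof -
  have "q > 0" "r > 0" using assms(1,2) prime_gt_0_nat by blast+
  then interpret group "CqD q r" by (rule group_CqD)
  have pow: "y [^]\<^bsub>CqD q r\<^esub> (n :: nat) \<in> Y" if "y \<in> Y" for y n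
    using subgroup_int_pow_closed[OF Y that, of "int n"] by (simp add: int_pow_int)
  have prime_q: "Factorial_Ring.prime (int q)" using assms(1) by simp
  obtain c' where c': "(c', 0, False) \<in> Y" "\<not> int q dvd c'"
  proof (cases e)
    case True
    have "(c, b, e) \<otimes>\<^bsub>CqD q r\<^esub> (c, b, e) \<in> Y" using cbe subgroup.m_closed[OF Y] by blast
    then have "((2 * c) mod int q, 0, False) \<in> Y" using True by simp
    moreover have "q \<ge> 3"
      using prime_ge_2_nat[OF assms(1)] assms(4) by (cases "q = 2") auto
    then have "\<not> int q dvd 2" by (auto dest: zdvd_imp_le)
    then have "\<not> int q dvd (2 * c) mod int q"
      using c prime_dvd_mult_iff[OF prime_q, of 2 c] by (simp add: dvd_mod_iff)
    ultimately show thesis by (rule that)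
  next
    case False
    have "(c, b, False) [^]\<^bsub>CqD q r\<^esub> r \<in> Y" using pow[OF cbe] False by simp
    then have "((int r * c) mod int q, 0, False) \<in> Y" by (simp add: nat_pow_CqD)
    moreover have "\<not> int q dvd int r"
      using primes_dvd_imp_eq[OF assms(1,2)] assms(3) by auto
    then have "\<not> int q dvd (int r * c) mod int q"
      using c prime_dvd_mult_iff[OF prime_q, of "int r" c] by (simp add: dvd_mod_iff)
    ultimately show thesis by (rule that)
  qed
  obtain n :: nat where "(int n * c') mod int q = m mod int q"
    using exists_nat_mult_mod_eq[OF assms(1) c'(2)] by blast
  then show ?thesis using pow[OF c'(1), of n] by (simp add: nat_pow_CqD)
qed

lemma Cr_in_subgroup_CqD:
  assumes "Factorial_Ring.prime r" "q > 0"
    and Y: "subgroup Y (CqD q r)" and "(0, b, False) \<in> Y" and "\<not> int r dvd b"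
  shows "(0, m mod int r, False) \<in> Y"
proof -
  have "r > 0" using assms(1) prime_gt_0_nat by blast
  then interpret group "CqD q r" using group_CqD \<open>q > 0\<close> by blast
  obtain n :: nat where "(int n * b) mod int r = m mod int r"
    using exists_nat_mult_mod_eq[OF assms(1,5)] by blast
  moreover have "(0, b, False) [^]\<^bsub>CqD q r\<^esub> (int n) \<in> Y"
    using subgroup_int_pow_closed[OF Y assms(4)] .
  ultimately show ?thesis by (simp add: int_pow_int nat_pow_CqD)
qed

lemma reflection_invariant_if_card_le_2:
  assumes "A \<subseteq> {0..<int r}" and "card A \<le> 2"
  shows "\<exists>j. \<forall>b\<in>A. (j - b) mod int r \<in> A"
proof -
  have "finite A" using assms(1) finite_subset by blast
  with assms(2) consider "A = {}" | x y where "A = {x, y}"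
    by (metis card_0_eq card_1_singletonE card_2_iff insert_absorb2 le_Suc_eq numeral_2_eq_2
        le_zero_eq One_nat_def)
  then show ?thesis
  proof cases
    case (2 x y)
    then show ?thesis using assms(1) by (intro exI[of _ "x + y"]) auto
  qed simp
qed

lemma reflection_invariant_subset:
  assumes "r \<le> 5" and T: "T \<subseteq> {0..<int r}"
  shows "\<exists>j. \<forall>b\<in>T. (j - b) mod int r \<in> T"
proof -
  define C where "C = {0..<int r} - T"
  have "card T \<le> r"
    using card_mono[OF _ T] by simp
  moreover have "card C = r - card T"
    using T by (simp add: C_def card_Diff_subset finite_subset)
  ultimately consider "card T \<le> 2" | "card C \<le> 2" using assms(1) by linarith
  then show ?thesis
  proof cases
    case 1
    then show ?thesis using reflection_invariant_if_card_le_2 T by blast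
  next
    case 2
    then obtain j where j: "\<forall>b\<in>C. (j - b) mod int r \<in> C"
      using reflection_invariant_if_card_le_2[of C r] by (auto simp: C_def)
    have "(j - b) mod int r \<in> T" if "b \<in> T" for b
    proof (rule ccontr)
      assume "(j - b) mod int r \<notin> T"
      moreover have "int r > 0" using T that by auto
      ultimately have "(j - b) mod int r \<in> C" using T by (auto simp: C_def)
      then have "(j - (j - b) mod int r) mod int r \<in> C" using j by blast
      moreover have "(j - (j - b) mod int r) mod int r = b"
        using T that by (auto simp: mod_simps)
      ultimately show False using that by (simp add: C_def)
    qed
    then show ?thesis by blast
  qed
qed

locale CqD_gen_wreath =
  fixes q r :: nat and S K H :: "(int \<times> int \<times> bool) set"
  assumes r_cases: "r \<in> {3, 5}" and prime_q: "Factorial_Ring.prime q" and odd_q: "odd q"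
    and q_neq_r: "q \<noteq> r"
    and S_carrier: "S \<subseteq> carrier (CqD q r)"
    and S_inv_closed: "\<forall>s\<in>S. inv\<^bsub>CqD q r\<^esub> s \<in> S"
    and gen_wreath: "nontrivial_gen_wreath (CqD q r) S K H"
begin

lemma q_ge_3: "q \<ge> 3"
  using prime_ge_2_nat[OF prime_q] odd_q by (cases "q = 2") auto

lemma r_ge_3: "r \<ge> 3" and prime_r: "Factorial_Ring.prime r"
  using r_cases by auto

lemma carrier_eq: "carrier (CqD q r) = {0..<int q} \<times> {0..<int r} \<times> UNIV"
  using carrier_CqD q_ge_3 by simp

sublocale G: group "CqD q r"
  using group_CqD q_ge_3 r_ge_3 by simp

lemma subgroup_H: "subgroup H (CqD q r)"
  and H_neq_carrier: "H \<noteq> carrier (CqD q r)"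
  and K_subset_H: "K \<subseteq> H"
  and K_normal: "K \<lhd> (CqD q r)\<lparr>carrier := H\<rparr>"
  and K_nontrivial: "K \<noteq> {(0, 0, False)}"
  and K_mult_outside_H: "K <#>\<^bsub>CqD q r\<^esub> (S - H) = S - H"
  and outside_H_mult_K: "(S - H) <#>\<^bsub>CqD q r\<^esub> K = S - H"
  using gen_wreath by (auto simp: nontrivial_gen_wreath_def one_CqD)

lemma subgroup_K: "subgroup K (CqD q r)"
  using G.incl_subgroup[OF subgroup_H normal_imp_subgroup[OF K_normal]] .

lemma mult_left_outside_H: "k \<in> K \<Longrightarrow> s \<in> S - H \<Longrightarrow> k \<otimes>\<^bsub>CqD q r\<^esub> s \<in> S - H"
  using K_mult_outside_H unfolding set_mult_def by blast

lemma mult_right_outside_H: "s \<in> S - H \<Longrightarrow> k \<in> K \<Longrightarrow> s \<otimes>\<^bsub>CqD q r\<^esub> k \<in> S - H"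
  using outside_H_mult_K unfolding set_mult_def by blast

lemma inv_outside_H:
  assumes "x \<in> S - H"
  shows "inv\<^bsub>CqD q r\<^esub> x \<in> S - H"
proof -
  have x: "x \<in> carrier (CqD q r)" using assms S_carrier by blast
  have "inv\<^bsub>CqD q r\<^esub> x \<notin> H"
  proof
    assume "inv\<^bsub>CqD q r\<^esub> x \<in> H"
    then have "inv\<^bsub>CqD q r\<^esub> (inv\<^bsub>CqD q r\<^esub> x) \<in> H" by (rule subgroup.m_inv_closed[OF subgroup_H])
    then show False using assms G.inv_inv[OF x] by simp
  qed
  then show ?thesis using assms S_inv_closed by blast
qed

lemma no_reflection_in_H:
  assumes Cq_H: "\<And>c. (c mod int q, 0, False) \<in> H" and Cr_H: "\<And>b. (0, b mod int r, False) \<in> H"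
  shows "(c, b, True) \<notin> H"
proof
  assume refl: "(c, b, True) \<in> H"
  have rot: "(c' mod int q, b' mod int r, False) \<in> H" for c' b'
    using subgroup.m_closed[OF subgroup_H Cq_H Cr_H, of c' b'] by simp
  have "carrier (CqD q r) \<subseteq> H"
  proof
    fix x
    assume "x \<in> carrier (CqD q r)"
    then obtain c' b' e' where x: "x = (c', b', e')" "0 \<le> c'" "c' < int q" "0 \<le> b'" "b' < int r"
      by (auto simp: carrier_eq)
    show "x \<in> H"
    proof (cases e')
      case False
      then show ?thesis using rot[of c' b'] x by simp
    next
      case True
      have "((c' - c) mod int q, (b' - b) mod int r, False) \<otimes>\<^bsub>CqD q r\<^esub> (c, b, True) \<in> H"
        using subgroup.m_closed[OF subgroup_H rot refl] .
      then show ?thesis using x True by (simp add: mod_simps)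
    qed
  qed
  then show False using H_neq_carrier subgroup.subset[OF subgroup_H] by blast
qed

lemma nontrivial_Aut_stab_by_CqD_map:
  assumes "k = -1 \<or> (k = 1 \<and> j = 0)" and "\<And>x. x \<in> S \<Longrightarrow> CqD_map q r (-1) k j x \<in> S"
  shows "\<exists>\<sigma>\<in>Aut_stab (CqD q r) S. \<exists>x\<in>carrier (CqD q r). \<sigma> x \<noteq> x"
proof (intro bexI)
  show "CqD_map q r (-1) k j \<in> Aut_stab (CqD q r) S"
    using q_ge_3 r_ge_3 assms
    by (intro involutive_hom_in_Aut_stab CqD_map_hom CqD_map_involutive S_carrier) auto
  have "(- 1) mod int q = int q - 1" using q_ge_3 by (simp add: zmod_minus1)
  then show "CqD_map q r (-1) k j (1, 0, False) \<noteq> (1, 0, False)" using q_ge_3 by simp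
  show "(1, 0, False) \<in> carrier (CqD q r)" using q_ge_3 r_ge_3 by (simp add: carrier_eq)
qed

lemma Cq_translate_outside_H:
  assumes Cq_K: "\<And>c. (c mod int q, 0, False) \<in> K" and "(c, b, e) \<in> S - H"
  shows "(c' mod int q, b, e) \<in> S - H"
proof -
  have "0 \<le> b" "b < int r" using assms(2) S_carrier by (auto simp: carrier_eq)
  moreover have "((c' - c) mod int q, 0, False) \<otimes>\<^bsub>CqD q r\<^esub> (c, b, e) \<in> S - H"
    using mult_left_outside_H[OF Cq_K assms(2)] .
  ultimately show ?thesis by (simp add: mod_simps)
qed

lemma Cr_translate_outside_H:
  assumes Cr_K: "\<And>b. (0, b mod int r, False) \<in> K" and "(c, b, e) \<in> S - H"
  shows "(c, b' mod int r, e) \<in> S - H"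
proof -
  have "0 \<le> c" "c < int q" using assms(2) S_carrier by (auto simp: carrier_eq)
  moreover have "(c, b, e) \<otimes>\<^bsub>CqD q r\<^esub> (0, (if e then b - b' else b' - b) mod int r, False) \<in> S - H"
    using mult_right_outside_H[OF assms(2) Cr_K] .
  ultimately show ?thesis by (cases e) (simp_all add: mod_simps)
qed

lemma nontrivial_Aut_stab_if_Cq_in_K:
  assumes Cq_K: "\<And>c. (c mod int q, 0, False) \<in> K"
  shows "\<exists>\<sigma>\<in>Aut_stab (CqD q r) S. \<exists>x\<in>carrier (CqD q r). \<sigma> x \<noteq> x"
proof (cases "\<exists>c b. (c, b, False) \<in> H \<and> b \<noteq> 0")
  case False
  show ?thesis
  proof (rule nontrivial_Aut_stab_by_CqD_map[of 1 0])
    fix x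
    assume "x \<in> S"
    then obtain c b e where x: "x = (c, b, e)" and bounds: "0 \<le> c" "c < int q" "0 \<le> b" "b < int r"
      using S_carrier by (cases x) (auto simp: carrier_eq)
    show "CqD_map q r (-1) 1 0 x \<in> S"
    proof (cases "x \<in> H")
      case True
      with False x have "e \<or> b = 0" by auto
      then have "CqD_map q r (-1) 1 0 x = inv\<^bsub>CqD q r\<^esub> x"
        using q_ge_3 r_ge_3 bounds by (auto simp: x inv_CqD carrier_eq)
      then show ?thesis using S_inv_closed \<open>x \<in> S\<close> by simp
    next
      case False
      then have "((- c) mod int q, b, e) \<in> S - H"
        using Cq_translate_outside_H[OF Cq_K] x \<open>x \<in> S\<close> by blast
      then show ?thesis using x bounds by simp
    qed
  qed simp
next
  case True
  then obtain c1 b1 where c1b1: "(c1, b1, False) \<in> H" "b1 \<noteq> 0" by blast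
  have "0 \<le> b1" "b1 < int r" using c1b1(1) subgroup.subset[OF subgroup_H] by (auto simp: carrier_eq)
  moreover have "((- c1) mod int q, 0, False) \<otimes>\<^bsub>CqD q r\<^esub> (c1, b1, False) \<in> H"
    using subgroup.m_closed[OF subgroup_H _ c1b1(1)] Cq_K K_subset_H by blast
  ultimately have "(0, b1, False) \<in> H" by (simp add: mod_simps)
  moreover have "\<not> int r dvd b1" using \<open>0 \<le> b1\<close> \<open>b1 < int r\<close> c1b1(2) by (auto dest: zdvd_imp_le)
  ultimately have Cr_H: "(0, b mod int r, False) \<in> H" for b
    using Cr_in_subgroup_CqD[OF prime_r _ subgroup_H] q_ge_3 by simp
  have no_refl: "(c, b, True) \<notin> H" for c b
    using no_reflection_in_H Cq_K K_subset_H Cr_H by blast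
  define T where "T = {b. (0, b, True) \<in> S}"
  have "T \<subseteq> {0..<int r}" using S_carrier by (auto simp: T_def carrier_eq)
  moreover have "r \<le> 5" using r_cases by auto
  ultimately obtain j where j: "\<forall>b\<in>T. (j - b) mod int r \<in> T"
    using reflection_invariant_subset by blast
  show ?thesis
  proof (rule nontrivial_Aut_stab_by_CqD_map[of "-1" j])
    fix x
    assume "x \<in> S"
    then obtain c b e where x: "x = (c, b, e)" and bounds: "0 \<le> c" "c < int q" "0 \<le> b" "b < int r"
      using S_carrier by (cases x) (auto simp: carrier_eq)
    show "CqD_map q r (-1) (-1) j x \<in> S"
    proof (cases e)
      case False
      then have "CqD_map q r (-1) (-1) j x = inv\<^bsub>CqD q r\<^esub> x"
        using q_ge_3 r_ge_3 bounds by (simp add: x inv_CqD carrier_eq)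
      then show ?thesis using S_inv_closed \<open>x \<in> S\<close> by simp
    next
      case True
      then have "(c, b, True) \<in> S - H" using no_refl x \<open>x \<in> S\<close> by simp
      then have "(0 mod int q, b, True) \<in> S - H" by (rule Cq_translate_outside_H[OF Cq_K])
      then have "(0, (j - b) mod int r, True) \<in> S - H"
        using j no_refl by (simp add: T_def)
      then have "((- c) mod int q, (j - b) mod int r, True) \<in> S - H"
        by (rule Cq_translate_outside_H[OF Cq_K])
      moreover have "CqD_map q r (-1) (-1) j x = ((- c) mod int q, (j - b) mod int r, True)"
        using True by (simp add: x)
      ultimately show ?thesis by simp
    qed
  qed simp
qed

lemma nontrivial_Aut_stab_if_Cr_in_K:
  assumes Cr_K: "\<And>b. (0, b mod int r, False) \<in> K"
  shows "\<exists>\<sigma>\<in>Aut_stab (CqD q r) S. \<exists>x\<in>carrier (CqD q r). \<sigma> x \<noteq> x"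
proof (cases "\<exists>c b e. (c, b, e) \<in> H \<and> c \<noteq> 0")
  case False
  show ?thesis
  proof (rule nontrivial_Aut_stab_by_CqD_map[of 1 0])
    fix x
    assume "x \<in> S"
    then obtain c b e where x: "x = (c, b, e)" and bounds: "0 \<le> c" "c < int q" "0 \<le> b" "b < int r"
      using S_carrier by (cases x) (auto simp: carrier_eq)
    show "CqD_map q r (-1) 1 0 x \<in> S"
    proof (cases "x \<in> H")
      case True
      with False x have "c = 0" by auto
      then show ?thesis using \<open>x \<in> S\<close> bounds by (simp add: x)
    next
      case False
      then have "inv\<^bsub>CqD q r\<^esub> x \<in> S - H" using inv_outside_H \<open>x \<in> S\<close> by blast
      then have "((- c) mod int q, if e then b else (- b) mod int r, e) \<in> S - H"
        using q_ge_3 r_ge_3 bounds by (simp add: x inv_CqD carrier_eq)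
      then have "((- c) mod int q, b mod int r, e) \<in> S - H"
        by (rule Cr_translate_outside_H[OF Cr_K])
      then show ?thesis using x bounds by simp
    qed
  qed simp
next
  case True
  then obtain c1 b1 e1 where c1: "(c1, b1, e1) \<in> H" "c1 \<noteq> 0" by blast
  have "0 \<le> c1" "c1 < int q" using c1(1) subgroup.subset[OF subgroup_H] by (auto simp: carrier_eq)
  then have "\<not> int q dvd c1" using c1(2) by (auto dest: zdvd_imp_le)
  then have Cq_H: "(c mod int q, 0, False) \<in> H" for c
    using Cq_in_subgroup_CqD[OF prime_q prime_r q_neq_r odd_q subgroup_H c1(1)] by blast
  have no_refl: "(c, b, True) \<notin> H" for c b
    using no_reflection_in_H Cq_H Cr_K K_subset_H by blast
  show ?thesis
  proof (rule nontrivial_Aut_stab_by_CqD_map[of "-1" 0])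
    fix x
    assume "x \<in> S"
    then obtain c b e where x: "x = (c, b, e)" and bounds: "0 \<le> c" "c < int q" "0 \<le> b" "b < int r"
      using S_carrier by (cases x) (auto simp: carrier_eq)
    show "CqD_map q r (-1) (-1) 0 x \<in> S"
    proof (cases e)
      case False
      then have "CqD_map q r (-1) (-1) 0 x = inv\<^bsub>CqD q r\<^esub> x"
        using q_ge_3 r_ge_3 bounds by (simp add: x inv_CqD carrier_eq)
      then show ?thesis using S_inv_closed \<open>x \<in> S\<close> by simp
    next
      case True
      then have "inv\<^bsub>CqD q r\<^esub> x \<in> S - H" using inv_outside_H no_refl x \<open>x \<in> S\<close> by simp
      then have "((- c) mod int q, b, True) \<in> S - H"
        using True q_ge_3 r_ge_3 bounds by (simp add: x inv_CqD carrier_eq)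
      then have "((- c) mod int q, (- b) mod int r, True) \<in> S - H"
        by (rule Cr_translate_outside_H[OF Cr_K])
      then show ?thesis using True by (simp add: x)
    qed
  qed simp
qed

lemma reflection_in_K_central:
  assumes refl_K: "(0, a, True) \<in> K" and no_rot: "\<And>b. (0, b, False) \<in> K \<Longrightarrow> b = 0"
    and "h \<in> H"
  shows "h \<otimes>\<^bsub>CqD q r\<^esub> (0, a, True) = (0, a, True) \<otimes>\<^bsub>CqD q r\<^esub> h"
proof -
  define k where "k = (0 :: int, a, True)"
  have K_carrier: "K \<subseteq> carrier (CqD q r)" using subgroup.subset[OF subgroup_K] .
  then have a: "0 \<le> a" "a < int r" and k_carrier: "k \<in> carrier (CqD q r)"
    using refl_K by (auto simp: k_def carrier_eq)
  have h: "h \<in> carrier (CqD q r)" using assms(3) subgroup.subset[OF subgroup_H] by blast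
  then obtain c b e where h_eq: "h = (c, b, e)" and bounds: "0 \<le> c" "c < int q" "0 \<le> b" "b < int r"
    by (cases h) (auto simp: carrier_eq)
  define z where "z = h \<otimes>\<^bsub>CqD q r\<^esub> k \<otimes>\<^bsub>CqD q r\<^esub> inv\<^bsub>CqD q r\<^esub> h"
  have "z \<in> K"
    using normal.inv_op_closed2[OF K_normal, of h "(0, a, True)"] assms(3) refl_K
      G.m_inv_consistent[OF subgroup_H assms(3)]
    by (simp add: z_def k_def)
  moreover have "fst z = 0" "snd (snd z) = True"
    using q_ge_3 r_ge_3 h bounds by (simp_all add: z_def k_def h_eq inv_CqD mod_simps)
  ultimately obtain a' where z: "z = (0, a', True)" "(0, a', True) \<in> K"
    by (cases z) auto
  then have "0 \<le> a'" "a' < int r" using K_carrier by (auto simp: carrier_eq)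
  have "k \<otimes>\<^bsub>CqD q r\<^esub> z \<in> K"
    using subgroup.m_closed[OF subgroup_K refl_K z(2)] by (simp add: k_def z(1))
  then have "(a - a') mod int r = 0" using no_rot by (simp add: k_def z)
  then have "a mod int r = a' mod int r" by (simp add: mod_eq_dvd_iff mod_eq_0_iff_dvd)
  then have "a' = a" using a \<open>0 \<le> a'\<close> \<open>a' < int r\<close> by simp
  then have "h \<otimes>\<^bsub>CqD q r\<^esub> k \<otimes>\<^bsub>CqD q r\<^esub> inv\<^bsub>CqD q r\<^esub> h = k"
    using z by (simp add: z_def k_def)
  then show ?thesis using G.inv_solve_right' h k_carrier by (simp add: k_def)
qed

lemma nontrivial_Aut_stab_if_reflection_in_K:
  assumes refl_K: "(0, a, True) \<in> K" and no_rot: "\<And>b. (0, b, False) \<in> K \<Longrightarrow> b = 0"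
  shows "\<exists>\<sigma>\<in>Aut_stab (CqD q r) S. \<exists>x\<in>carrier (CqD q r). \<sigma> x \<noteq> x"
proof -
  define k where "k = (0 :: int, a, True)"
  have k_carrier: "k \<in> carrier (CqD q r)"
    using refl_K subgroup.subset[OF subgroup_K] by (auto simp: k_def)
  have central: "h \<otimes>\<^bsub>CqD q r\<^esub> k = k \<otimes>\<^bsub>CqD q r\<^esub> h" if "h \<in> H" for h
    using reflection_in_K_central[OF assms that] by (simp add: k_def)
  have kk: "k \<otimes>\<^bsub>CqD q r\<^esub> k = \<one>\<^bsub>CqD q r\<^esub>" by (simp add: k_def one_CqD)
  have cancel: "k \<otimes>\<^bsub>CqD q r\<^esub> (k \<otimes>\<^bsub>CqD q r\<^esub> x) = x" if "x \<in> carrier (CqD q r)" for x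
    using kk k_carrier that by (simp flip: G.m_assoc)
  define \<sigma> where "\<sigma> = (\<lambda>g. k \<otimes>\<^bsub>CqD q r\<^esub> g \<otimes>\<^bsub>CqD q r\<^esub> k)"
  have "\<sigma> ` S \<subseteq> S"
  proof
    fix y
    assume "y \<in> \<sigma> ` S"
    then obtain x where x: "x \<in> S" "y = \<sigma> x" by blast
    then have x_carrier: "x \<in> carrier (CqD q r)" using S_carrier by blast
    show "y \<in> S"
    proof (cases "x \<in> H")
      case True
      then have "\<sigma> x = x" using central k_carrier x_carrier cancel by (simp add: \<sigma>_def G.m_assoc)
      then show ?thesis using x by simp
    next
      case False
      then have "k \<otimes>\<^bsub>CqD q r\<^esub> x \<in> S - H"
        using mult_left_outside_H[OF refl_K] x(1) by (simp add: k_def)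
      then have "k \<otimes>\<^bsub>CqD q r\<^esub> x \<otimes>\<^bsub>CqD q r\<^esub> k \<in> S - H"
        using mult_right_outside_H[OF _ refl_K] by (simp add: k_def)
      then show ?thesis using x by (simp add: \<sigma>_def)
    qed
  qed
  then have "\<sigma> \<in> Aut_stab (CqD q r) S"
    using G.conj_by_involution_hom[OF k_carrier kk] S_carrier k_carrier kk cancel
    by (intro involutive_hom_in_Aut_stab) (simp_all add: \<sigma>_def G.m_assoc)
  moreover have "(- 1) mod int r = int r - 1" using r_ge_3 by (simp add: zmod_minus1)
  then have "\<sigma> (0, 1, False) \<noteq> (0, 1, False)" using r_ge_3 by (simp add: \<sigma>_def k_def mod_simps)
  moreover have "(0, 1, False) \<in> carrier (CqD q r)" using q_ge_3 r_ge_3 by (simp add: carrier_eq)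
  ultimately show ?thesis by blast
qed

lemma K_cases:
  obtains (Cq) "\<And>c. (c mod int q, 0, False) \<in> K"
    | (Cr) "\<And>b. (0, b mod int r, False) \<in> K"
    | (reflection) a where "(0, a, True) \<in> K" "\<And>b. (0, b, False) \<in> K \<Longrightarrow> b = 0"
proof -
  have "(0, 0, False) \<in> K" using subgroup.one_closed[OF subgroup_K] by (simp add: one_CqD)
  then obtain k where "k \<in> K" "k \<noteq> (0, 0, False)"
    using K_nontrivial by blast
  then obtain c b e where k: "(c, b, e) \<in> K" "(c, b, e) \<noteq> (0, 0, False)"
    by (cases k) simp
  then have bounds: "0 \<le> c" "c < int q" "0 \<le> b" "b < int r"
    using subgroup.subset[OF subgroup_K] by (auto simp: carrier_eq)
  show thesis
  proof (cases "c = 0")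
    case False
    then have "\<not> int q dvd c" using bounds by (auto dest: zdvd_imp_le)
    then show thesis
      by (intro Cq Cq_in_subgroup_CqD[OF prime_q prime_r q_neq_r odd_q subgroup_K k(1)])
  next
    case c: True
    show thesis
    proof (cases "\<exists>b'. (0, b', False) \<in> K \<and> b' \<noteq> 0")
      case True
      then obtain b' where b': "(0, b', False) \<in> K" "b' \<noteq> 0" by blast
      then have "0 \<le> b'" "b' < int r" using subgroup.subset[OF subgroup_K] by (auto simp: carrier_eq)
      then have "\<not> int r dvd b'" using b'(2) by (auto dest: zdvd_imp_le)
      then show thesis using Cr_in_subgroup_CqD[OF prime_r _ subgroup_K b'(1)] q_ge_3 Cr by simp
    next
      case False
      then have "e" using k c by auto
      then show thesis using k(1) c False by (intro reflection[of b]) auto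
    qed
  qed
qed

end

theorem proposition4p10:
  fixes q r :: nat and S K H :: "(int \<times> (int \<times> bool)) set"
  assumes "r \<in> {3, 5}" and "Factorial_Ring.prime q" and "odd q" and "q \<noteq> r"
    and "S \<subseteq> carrier (CqD q r)"
    and "\<forall>s\<in>S. inv\<^bsub>CqD q r\<^esub> s \<in> S"
    and "nontrivial_gen_wreath (CqD q r) S K H"
    and "Factorial_Ring.prime (card K)"
  shows "\<exists>\<sigma>\<in>Aut_stab (CqD q r) S. \<exists>x\<in>carrier (CqD q r). \<sigma> x \<noteq> x"
proof -
  interpret CqD_gen_wreath q r S K H
    using assms(1-7) by unfold_locales
  show ?thesis
  proof (cases rule: K_cases)
    case Cq
    then show ?thesis by (rule nontrivial_Aut_stab_if_Cq_in_K)
  next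
    case Cr
    then show ?thesis by (rule nontrivial_Aut_stab_if_Cr_in_K)
  next
    case (reflection a)
    then show ?thesis by (rule nontrivial_Aut_stab_if_reflection_in_K)
  qed
qed

end
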